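(* Let $a,b,u,v$ be integers with $b>a\ge2$ and $u,v\ge2$, and set $X:=ab-a-b$. Suppose that (1) $a$, $b$ and $uv-1$ are pairwise coprime; (2) $\frac{1}{a}+\frac{1}{b}+\frac{v}{uv-1}>1$; (3) $vab-1=(uv-1)X$. If $u=2$ then $2\le a\le5$, and if $u=3$ then $a\in\{2,3\}$. *)

theory Defs
  imports Complex_Main
begin

end

theory Submission
  imports Defs
begin

text \<open>Rewriting \<open>v a b - 1 = (u v - 1) X\<close> as \<open>v ((u - 1) a b - u (a + b)) = X - 1\<close>
  and using \<open>v \<ge> 2\<close> gives \<open>(2u - 3) a b + 1 \<le> (2u - 1)(a + b)\<close>; for \<open>u = 2\<close> this says
  \<open>(a - 3)(b - 3) \<le> 8\<close>, and for \<open>u = 3\<close> it says \<open>(3a - 5)(3b - 5) \<le> 22\<close>, which together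
  with \<open>a < b\<close> bound \<open>a\<close>.\<close>

lemma frobenius_number_pos:
  fixes a b :: int
  assumes "2 \<le> a" and "a < b"
  shows "1 \<le> a*b - a - b"
proof -
  have "1 * 2 \<le> (a - 1) * (b - 1)"
    using assms by (intro mult_mono) auto
  then show ?thesis by (simp add: algebra_simps)
qed

lemma product_bound_from_equation:
  fixes a b u v :: int
  assumes "2 \<le> v" and "1 \<le> a*b - a - b"
    and "v*a*b - 1 = (u*v - 1) * (a*b - a - b)"
  shows "(2*u - 3)*a*b + 1 \<le> (2*u - 1)*(a + b)"
proof -
  define d where "d = (u - 1)*a*b - u*(a + b)"
  have eq: "v * d = a*b - a - b - 1"
    using assms(3) unfolding d_def by (simp add: algebra_simps)
  then have "0 \<le> v * d"
    using assms(2) by simp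
  then have "0 \<le> d"
    using assms(1) by (simp add: zero_le_mult_iff)
  then have "2 * d \<le> v * d"
    using assms(1) by (intro mult_right_mono)
  then show ?thesis
    using eq unfolding d_def by (simp add: algebra_simps)
qed

lemma u2_product_bound_imp_le_5:
  fixes a b :: int
  assumes "2 \<le> a" and "a < b" and "a*b + 1 \<le> 3*(a + b)"
  shows "a \<le> 5"
proof (rule ccontr)
  assume "\<not> a \<le> 5"
  then have "3 * 4 \<le> (a - 3) * (b - 3)"
    using assms(2) by (intro mult_mono) auto
  with assms(3) show False
    by (simp add: algebra_simps)
qed

lemma u3_product_bound_imp_le_3:
  fixes a b :: int
  assumes "2 \<le> a" and "a < b" and "3*a*b + 1 \<le> 5*(a + b)"
  shows "a \<le> 3"
proof (rule ccontr)
  assume "\<not> a \<le> 3"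
  then have "7 * 10 \<le> (3*a - 5) * (3*b - 5)"
    using assms(2) by (intro mult_mono) auto
  with assms(3) show False
    by (simp add: algebra_simps)
qed

theorem lemma3p5:
  fixes a b u v :: int
  assumes "2 \<le> a" and "a < b" and "2 \<le> u" and "2 \<le> v"
    and "coprime a b" and "coprime a (u*v - 1)" and "coprime b (u*v - 1)"
    and "1 / real_of_int a + 1 / real_of_int b + real_of_int v / real_of_int (u*v - 1) > 1"
    and "v*a*b - 1 = (u*v - 1) * (a*b - a - b)"
  shows "(u = 2 \<longrightarrow> 2 \<le> a \<and> a \<le> 5) \<and> (u = 3 \<longrightarrow> a \<in> {2, 3})"
proof -
  have bound: "(2*u - 3)*a*b + 1 \<le> (2*u - 1)*(a + b)"
    using product_bound_from_equation[OF assms(4) frobenius_number_pos[OF assms(1,2)] assms(9)] .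
  have "a \<le> 5" if "u = 2"
    using bound that by (intro u2_product_bound_imp_le_5[OF assms(1,2)]) simp
  moreover have "a \<le> 3" if "u = 3"
    using bound that by (intro u3_product_bound_imp_le_3[OF assms(1,2)]) simp
  ultimately show ?thesis
    using assms(1) by auto
qed

end
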